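(* Let $n\ge1$ and let $Q,Q'$ be key polynomials for $\nu$ of degree $n$ with $\nu(Q)<\nu(Q')$. For $f\in K[x]$ let $f=\sum_{i=0}^rf_iQ'^i$ be the $Q'$-expansion of $f$. Then \[ \nu_Q(f)=\min_{0\le i\le r}\nu_Q(f_iQ'^i). \]
   Context: Let $K$ be a field and $\nu$ a rank one valuation on $K[x]$ (values in $\mathbb{R}\cup\{\infty\}$). For $f\in K[x]$ and $b\ge 0$, $\partial_bf$ denotes the $b$-th Hasse derivative of $f$ (defined by $f(x+y)=\sum_b\partial_bf(x)y^b$). For nonconstant $f$ set $\epsilon(f)=\max_{1\le b\le\deg f}\frac{\nu(f)-\nu(\partial_bf)}{b}$ (with $\epsilon(c)=-\infty$ for constants $c$). A monic $Q\in K[x]$ is a key polynomial for $\nu$ if for every $f\in K[x]$, $\epsilon(f)\ge\epsilon(Q)$ implies $\deg f\ge\deg Q$. For a monic $Q$ of degree $n\ge1$, every $f\in K[x]$ has a unique $Q$-expansion $f=\sum_{i=0}^ra_iQ^i$ with $\deg a_i<n$, and the truncation is $\nu_Q(f)=\min_i\nu(a_iQ^i)$. *)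

theory Defs
  imports "HOL-Computational_Algebra.Polynomial" "HOL-Library.Extended_Real"
begin

text \<open>A rank one valuation on K[x]: values in the reals together with \<infinity>
  (support allowed, i.e. nonzero polynomials may have value \<infinity>).\<close>
definition valuation :: "('a::field poly \<Rightarrow> ereal) \<Rightarrow> bool" where
  "valuation \<nu> \<longleftrightarrow>
     \<nu> 0 = \<infinity> \<and> \<nu> 1 = 0 \<and> (\<forall>f. \<nu> f \<noteq> -\<infinity>) \<and>
     (\<forall>f g. \<nu> (f * g) = \<nu> f + \<nu> g) \<and>
     (\<forall>f g. min (\<nu> f) (\<nu> g) \<le> \<nu> (f + g))"

text \<open>Hasse derivatives: f(x+y) = sum_b (hasse b f)(x) y^b. We view f(x+y) as a
  polynomial in the outer variable y with coefficients in K[x].\<close>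
definition hasse :: "nat \<Rightarrow> 'a::comm_ring_1 poly \<Rightarrow> 'a poly" where
  "hasse b f = coeff (pcompose (map_poly (\<lambda>c. [:c:]) f) [: [:0, 1:], 1 :]) b"

definition eps :: "('a::field poly \<Rightarrow> ereal) \<Rightarrow> 'a poly \<Rightarrow> ereal" where
  "eps \<nu> f = (if degree f = 0 then -\<infinity>
     else Max ((\<lambda>b. (\<nu> f - \<nu> (hasse b f)) / ereal (real b)) ` {1..degree f}))"

definition key_poly :: "('a::field poly \<Rightarrow> ereal) \<Rightarrow> 'a poly \<Rightarrow> bool" where
  "key_poly \<nu> Q \<longleftrightarrow> lead_coeff Q = 1 \<and> (\<forall>f. eps \<nu> f \<ge> eps \<nu> Q \<longrightarrow> degree f \<ge> degree Q)"

text \<open>The i-th coefficient of the Q-expansion of f (the unique a_i with deg a_i < deg Q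
  and f = sum a_i Q^i).\<close>
definition qexp_coeff :: "'a::field poly \<Rightarrow> 'a poly \<Rightarrow> nat \<Rightarrow> 'a poly" where
  "qexp_coeff Q f i = (f div Q ^ i) mod Q"

text \<open>Truncation nu_Q(f) = min_i nu(a_i Q^i); indices beyond the length of the
  expansion contribute a_i = 0, i.e. value \<infinity>.\<close>
definition trunc_val :: "('a::field poly \<Rightarrow> ereal) \<Rightarrow> 'a poly \<Rightarrow> 'a poly \<Rightarrow> ereal" where
  "trunc_val \<nu> Q f = (MIN i\<in>{..degree f}. \<nu> (qexp_coeff Q f i * Q ^ i))"

end

theory Submission
  imports Defs
begin

text \<open>
  Put \<open>h = Q' - Q\<close>; as \<open>Q, Q'\<close> are monic of degree \<open>n\<close>, \<open>deg h < n\<close>, and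
  \<open>\<nu> Q < \<nu> Q'\<close> forces \<open>\<nu> h = \<nu> Q\<close>.  Since \<open>\<epsilon>(g) < \<epsilon>(Q)\<close> for every \<open>g\<close> of degree
  below \<open>n\<close>, comparing Hasse derivatives of order \<open>\<beta>\<close>, where \<open>\<beta>\<close> realises \<open>\<epsilon>(Q)\<close>, shows
  that for \<open>a, b\<close> of degree below \<open>n\<close> the quotient of \<open>a b\<close> by \<open>Q\<close> has value larger than
  \<open>\<nu>(a) + \<nu>(b) - \<nu>(Q)\<close>.  Hence \<open>\<nu>\<^sub>Q\<close> is ultrametric, \<open>\<nu>\<^sub>Q(x d) \<ge> \<nu>\<^sub>Q(x) + \<nu>(d)\<close> for
  \<open>deg d < n\<close>, and \<open>\<nu>\<^sub>Q(x Q\<^sup>j) = \<nu>\<^sub>Q(x) + j \<nu>(Q)\<close>.  Expanding \<open>a (Q + h)\<^sup>i\<close> binomially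
  gives \<open>\<nu>\<^sub>Q(a Q'\<^sup>i) \<ge> \<nu>(a) + i \<nu>(Q)\<close>.  Conversely, each \<open>a h\<^sup>k\<close> agrees with a polynomial of
  degree below \<open>n\<close> and of the same value up to terms of larger \<open>\<nu>\<^sub>Q\<close>; so the terms
  \<open>a\<^sub>i Q'\<^sup>i\<close> of minimal value add up, modulo such terms, to a \<open>Q\<close>-expansion whose top
  coefficient has exactly that value, and the minimum is attained by \<open>\<nu>\<^sub>Q(f)\<close>.
\<close>

lemma ereal_diff_le_of_divide_le:
  fixes x y :: ereal
  assumes "(x - y) / ereal b \<le> ereal e" "0 < b" "y \<noteq> -\<infinity>"
  shows "x - ereal (b * e) \<le> y"
  using assms by (cases x; cases y) (auto simp: divide_le_eq mult.commute)

lemma ereal_diff_less_of_divide_less: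
  fixes x y :: ereal
  assumes "(x - y) / ereal b < ereal e" "0 < b" "y \<noteq> -\<infinity>"
  shows "x - ereal (b * e) < y"
  using assms by (cases x; cases y) (auto simp: divide_less_eq mult.commute)

lemma ereal_eq_of_diff_divide_eq:
  "(ereal a - y) / ereal b = ereal e \<Longrightarrow> 0 < b \<Longrightarrow> y = ereal (a - b * e)"
  by (cases y) (auto simp: divide_eq_eq mult.commute)

lemma ereal_add_less_le_mono: "ereal x < u \<Longrightarrow> ereal y \<le> v \<Longrightarrow> ereal x + ereal y < u + v"
  by (cases u; cases v) auto

lemma degree_diff_less_if_lead_coeff_eq:
  fixes p q :: "'a::comm_ring_1 poly"
  assumes "degree p = n" "degree q = n" "lead_coeff p = lead_coeff q" "0 < n"
  shows "degree (p - q) < n"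
proof -
  have "degree (p - q) \<le> n"
    using assms(1,2) by (intro degree_diff_le) simp_all
  moreover have "coeff (p - q) n = 0"
    using assms(1-3) by simp
  ultimately show ?thesis
    using assms(4) by (metis le_neq_implies_less leading_coeff_0_iff degree_0)
qed

lemma sum_sum_atMost_swap:
  fixes m :: nat
  assumes "finite S" "\<And>i. i \<in> S \<Longrightarrow> i \<le> m"
  shows "(\<Sum>i\<in>S. \<Sum>k\<le>i. f i k) = (\<Sum>k\<le>m. \<Sum>i\<in>{i \<in> S. k \<le> i}. f i k)"
proof -
  have "{k \<in> {..m}. k \<le> i} = {..i}" if "i \<in> S" for i
    using assms(2)[OF that] by auto
  then have "(\<Sum>i\<in>S. \<Sum>k\<le>i. f i k) = (\<Sum>i\<in>S. \<Sum>k\<in>{k \<in> {..m}. k \<le> i}. f i k)"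
    by simp
  also have "\<dots> = (\<Sum>k\<le>m. \<Sum>i\<in>{i \<in> S. k \<le> i}. f i k)"
    using assms(1) by (rule sum.swap_restrict) simp
  finally show ?thesis .
qed

section \<open>Hasse derivatives and \<open>\<epsilon>\<close>\<close>

lemma map_poly_const_poly_add:
  "map_poly (\<lambda>c. [:c:]) (f + g) = map_poly (\<lambda>c. [:c:]) f + map_poly (\<lambda>c. [:c:]) g"
  by (rule poly_eqI) (simp add: coeff_map_poly)

lemma map_poly_const_poly_mult:
  "map_poly (\<lambda>c. [:c:]) (f * g) = map_poly (\<lambda>c. [:c:]) f * map_poly (\<lambda>c. [:c:]) g"
  by (rule poly_eqI)
    (simp add: coeff_map_poly coeff_mult sum_to_poly[symmetric] mult_to_poly mult_ac)

lemma hasse_add: "hasse b (f + g) = hasse b f + hasse b g"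
  by (simp add: hasse_def map_poly_const_poly_add pcompose_add)

lemma hasse_mult: "hasse b (f * g) = (\<Sum>j\<le>b. hasse j f * hasse (b - j) g)"
  by (simp add: hasse_def map_poly_const_poly_mult pcompose_mult coeff_mult)

lemma hasse_0: "hasse 0 f = f"
proof -
  have "poly (map_poly (\<lambda>c. [:c:]) f) [:0, 1:] = f"
    by (induct f rule: pCons_induct) (simp_all add: map_poly_pCons)
  then show ?thesis
    by (simp add: hasse_def poly_0_coeff_0[symmetric] poly_pcompose)
qed

lemma hasse_zero [simp]: "hasse b 0 = 0"
  by (simp add: hasse_def)

lemma degree_map_poly_const_poly [simp]: "degree (map_poly (\<lambda>c. [:c:]) f) = degree f"
  by (rule degree_map_poly) simp

lemma degree_pcompose_hasse:
  "degree (pcompose (map_poly (\<lambda>c. [:c:]) f) [: [:0, 1:], 1 :]) = degree f"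
  for f :: "'a::field poly"
  by (simp add: degree_pcompose)

lemma hasse_eq_0: "degree f < b \<Longrightarrow> hasse b f = 0"
  for f :: "'a::field poly"
  by (simp add: hasse_def coeff_eq_0 degree_pcompose_hasse)

lemma hasse_degree: "hasse (degree f) f = [:lead_coeff f:]"
  for f :: "'a::field poly"
  using lead_coeff_comp[of "[: [:0, 1:], 1 :]" "map_poly (\<lambda>c. [:c:]) f"]
  by (simp add: hasse_def degree_pcompose_hasse coeff_map_poly)

lemma eps_ge_quotient:
  "b \<in> {1..degree f} \<Longrightarrow> (\<nu> f - \<nu> (hasse b f)) / ereal (real b) \<le> eps \<nu> f"
  by (auto simp: eps_def)

lemma eps_attained:
  assumes "degree f \<noteq> 0"
  obtains b where "b \<in> {1..degree f}" "eps \<nu> f = (\<nu> f - \<nu> (hasse b f)) / ereal (real b)"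
proof -
  have "eps \<nu> f \<in> (\<lambda>b. (\<nu> f - \<nu> (hasse b f)) / ereal (real b)) ` {1..degree f}"
    unfolding eps_def using assms by (simp del: Max_in) (rule Max_in, auto)
  then show ?thesis using that by blast
qed

locale poly_valuation =
  fixes \<nu> :: "'a::field poly \<Rightarrow> ereal"
  assumes valuation: "valuation \<nu>"
begin

lemma valuation_0 [simp]: "\<nu> 0 = \<infinity>"
  and valuation_1 [simp]: "\<nu> 1 = 0"
  and valuation_neq_minf [simp]: "\<nu> f \<noteq> -\<infinity>"
  and valuation_mult: "\<nu> (f * g) = \<nu> f + \<nu> g"
  and valuation_add_ge: "min (\<nu> f) (\<nu> g) \<le> \<nu> (f + g)"
  using valuation by (auto simp: valuation_def)

lemma valuation_uminus [simp]: "\<nu> (- f) = \<nu> f"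
proof -
  have "\<nu> (-1) + \<nu> (-1) = 0"
    using valuation_mult[of "-1" "-1"] by simp
  then have "\<nu> (-1) = 0"
    using valuation_neq_minf[of "-1"] by (cases "\<nu> (-1)") auto
  then show ?thesis
    using valuation_mult[of "-1" f] by simp
qed

lemma valuation_diff_ge: "min (\<nu> f) (\<nu> g) \<le> \<nu> (f - g)"
  using valuation_add_ge[of f "- g"] by simp

lemma valuation_add_eq_left:
  assumes "\<nu> f < \<nu> g"
  shows "\<nu> (f + g) = \<nu> f"
proof -
  have "min (\<nu> (f + g)) (\<nu> g) \<le> \<nu> f"
    using valuation_diff_ge[of "f + g" g] by simp
  then show ?thesis
    using valuation_add_ge[of f g] assms by (auto simp: min_def split: if_splits)
qed

lemma valuation_diff_eq_right: "\<nu> f < \<nu> g \<Longrightarrow> \<nu> (g - f) = \<nu> f"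
  using valuation_add_eq_left[of "- f" g] by simp

lemma valuation_sum_gt:
  "(\<And>x. x \<in> A \<Longrightarrow> c < \<nu> (F x)) \<Longrightarrow> c < \<infinity> \<Longrightarrow> c < \<nu> (sum F A)"
proof (induct A rule: infinite_finite_induct)
  case (insert x A)
  then have "c < min (\<nu> (F x)) (\<nu> (sum F A))" by simp
  also have "\<dots> \<le> \<nu> (sum F (insert x A))" using insert valuation_add_ge by simp
  finally show ?case .
qed simp_all

lemma valuation_of_nat_nonneg: "0 \<le> \<nu> (of_nat k)"
proof (induct k)
  case (Suc k)
  have "0 \<le> min (\<nu> 1) (\<nu> (of_nat k))" using Suc by simp
  also have "\<dots> \<le> \<nu> (of_nat (Suc k))" using valuation_add_ge[of 1 "of_nat k"] by (simp add: add.commute)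
  finally show ?case .
qed simp

lemma valuation_const_neq_inf: "c \<noteq> 0 \<Longrightarrow> \<nu> [:c:] \<noteq> \<infinity>"
  using valuation_mult[of "[:c:]" "[:inverse c:]"] valuation_neq_minf[of "[:inverse c:]"]
  by (auto simp: mult_to_poly one_pCons[symmetric])

lemma hasse_ge_if_eps_le:
  assumes "eps \<nu> f \<le> ereal e"
  shows "\<nu> f - ereal (real b * e) \<le> \<nu> (hasse b f)"
proof -
  consider "b = 0" | "b \<in> {1..degree f}" | "degree f < b" by force
  then show ?thesis
  proof cases
    case 2
    have "(\<nu> f - \<nu> (hasse b f)) / ereal (real b) \<le> ereal e"
      using eps_ge_quotient[OF 2, of \<nu>] assms by (rule order_trans)
    with 2 show ?thesis by (intro ereal_diff_le_of_divide_le) auto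
  qed (simp_all add: hasse_0 hasse_eq_0)
qed

lemma hasse_gt_if_eps_less:
  assumes "eps \<nu> f < ereal e" "1 \<le> b" "\<nu> f \<noteq> \<infinity>"
  shows "\<nu> f - ereal (real b * e) < \<nu> (hasse b f)"
proof (cases "b \<le> degree f")
  case True
  then have "(\<nu> f - \<nu> (hasse b f)) / ereal (real b) \<le> eps \<nu> f"
    using assms(2) by (intro eps_ge_quotient) auto
  then have "(\<nu> f - \<nu> (hasse b f)) / ereal (real b) < ereal e"
    using assms(1) by (rule le_less_trans)
  with assms(2) show ?thesis by (intro ereal_diff_less_of_divide_less) auto
next
  case False
  with assms(3) show ?thesis
    by (cases "\<nu> f") (auto simp: hasse_eq_0)
qed

end

section \<open>Key polynomials and division by \<open>Q\<close>\<close>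

locale key_polynomial = poly_valuation +
  fixes Q :: "'a::field poly" and n :: nat
  assumes key_poly: "key_poly \<nu> Q"
    and degree_Q: "degree Q = n"
    and n_pos: "1 \<le> n"
    and valuation_Q_neq_inf: "\<nu> Q \<noteq> \<infinity>"
begin

text \<open>In lemma names, \<open>reduced\<close> means of degree less than \<open>n\<close>.\<close>

lemma Q_neq_0: "Q \<noteq> 0"
  using degree_Q n_pos by auto

lemma eps_less_eps_Q: "degree g < n \<Longrightarrow> eps \<nu> g < eps \<nu> Q"
  using key_poly degree_Q by (auto simp: key_poly_def not_le[symmetric])

lemma valuation_neq_inf_if_degree_less:
  assumes "degree g < n" "g \<noteq> 0"
  shows "\<nu> g \<noteq> \<infinity>"
proof
  assume inf: "\<nu> g = \<infinity>"
  show False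
  proof (cases "degree g = 0")
    case True
    then obtain c where "g = [:c:]" by (metis degree_eq_zeroE)
    with assms(2) inf valuation_const_neq_inf show False by auto
  next
    case False
    then have "(\<nu> g - \<nu> (hasse (degree g) g)) / ereal (real (degree g)) \<le> eps \<nu> g"
      by (intro eps_ge_quotient) auto
    with inf False have "eps \<nu> g = \<infinity>" by simp
    with eps_less_eps_Q[OF assms(1)] show False by simp
  qed
qed

lemma valuation_finite_if_degree_less:
  assumes "degree g < n" "g \<noteq> 0"
  obtains t where "\<nu> g = ereal t"
  using valuation_neq_inf_if_degree_less[OF assms] valuation_neq_minf[of g]
  by (cases "\<nu> g") auto

definition \<gamma> :: real where "\<gamma> = real_of_ereal (\<nu> Q)"

definition \<epsilon> :: real where "\<epsilon> = real_of_ereal (eps \<nu> Q)"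

lemma valuation_Q: "\<nu> Q = ereal \<gamma>"
  using valuation_Q_neq_inf valuation_neq_minf[of Q] by (cases "\<nu> Q") (auto simp: \<gamma>_def)

lemma eps_Q: "eps \<nu> Q = ereal \<epsilon>"
proof -
  have "\<nu> (hasse n Q) = 0"
    using key_poly degree_Q hasse_degree[of Q] by (simp add: key_poly_def one_pCons[symmetric])
  moreover have "(\<nu> Q - \<nu> (hasse n Q)) / ereal (real n) \<le> eps \<nu> Q"
    using degree_Q n_pos by (intro eps_ge_quotient) auto
  ultimately have "eps \<nu> Q \<noteq> -\<infinity>"
    using n_pos by (auto simp: valuation_Q)
  moreover obtain b where "b \<in> {1..n}" "eps \<nu> Q = (\<nu> Q - \<nu> (hasse b Q)) / ereal (real b)"
    using eps_attained degree_Q n_pos by (metis not_one_le_zero)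
  then have "eps \<nu> Q \<noteq> \<infinity>"
    using valuation_neq_minf[of "hasse b Q"] by (cases "\<nu> (hasse b Q)") (auto simp: valuation_Q)
  ultimately show ?thesis
    by (cases "eps \<nu> Q") (auto simp: \<epsilon>_def)
qed

lemma hasse_Q_ge: "ereal (\<gamma> - real b * \<epsilon>) \<le> \<nu> (hasse b Q)"
  using hasse_ge_if_eps_le[of Q \<epsilon> b] by (simp add: eps_Q valuation_Q)

lemma hasse_Q_attained:
  obtains \<beta> where "1 \<le> \<beta>" "\<nu> (hasse \<beta> Q) = ereal (\<gamma> - real \<beta> * \<epsilon>)"
proof -
  obtain \<beta> where \<beta>: "\<beta> \<in> {1..n}" "ereal \<epsilon> = (ereal \<gamma> - \<nu> (hasse \<beta> Q)) / ereal (real \<beta>)"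
    using eps_attained[of Q \<nu>] degree_Q n_pos by (auto simp: eps_Q valuation_Q)
  then show ?thesis
    using that ereal_eq_of_diff_divide_eq[OF \<beta>(2)[symmetric]] by auto
qed

lemma hasse_gt_if_degree_less:
  assumes "degree g < n" "g \<noteq> 0" "1 \<le> b"
  shows "\<nu> g - ereal (real b * \<epsilon>) < \<nu> (hasse b g)"
  using hasse_gt_if_eps_less[of g \<epsilon> b] eps_less_eps_Q[OF assms(1)] assms(3)
    valuation_neq_inf_if_degree_less[OF assms(1,2)]
  by (simp add: eps_Q)

lemma hasse_ge_if_degree_less:
  "degree g < n \<Longrightarrow> \<nu> g - ereal (real b * \<epsilon>) \<le> \<nu> (hasse b g)"
  using hasse_ge_if_eps_le[of g \<epsilon> b] eps_less_eps_Q[of g] by (simp add: eps_Q)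


lemma degree_mod_Q_less: "degree (x mod Q) < n"
  using degree_mod_less[OF Q_neq_0, of x] degree_Q n_pos by auto

lemma degree_div_Q_less:
  assumes "degree x < 2 * n"
  shows "degree (x div Q) < n"
proof (cases "x div Q = 0")
  case False
  have "degree (Q * (x div Q)) = n + degree (x div Q)"
    using False Q_neq_0 degree_Q by (simp add: degree_mult_eq)
  moreover have "x = Q * (x div Q) + x mod Q"
    by (simp add: mult.commute)
  ultimately have "degree x = n + degree (x div Q)"
    using degree_mod_Q_less[of x] by (metis degree_add_eq_left le_add1 order_less_le_trans)
  with assms show ?thesis by simp
qed (use n_pos in simp)

lemma hasse_mult_gt_if_degree_less:
  assumes a: "degree a < n" "a \<noteq> 0" and b: "degree b < n" "b \<noteq> 0" and "1 \<le> \<beta>"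
  shows "\<nu> a + \<nu> b - ereal (real \<beta> * \<epsilon>) < \<nu> (hasse \<beta> (a * b))"
proof -
  obtain A where A: "\<nu> a = ereal A" using valuation_finite_if_degree_less[OF a] .
  obtain B where B: "\<nu> b = ereal B" using valuation_finite_if_degree_less[OF b] .
  have "ereal (A + B - real \<beta> * \<epsilon>) < \<nu> (hasse j a * hasse (\<beta> - j) b)" if "j \<le> \<beta>" for j
  proof -
    have "ereal (A + B - real \<beta> * \<epsilon>) = ereal (A - real j * \<epsilon>) + ereal (B - real (\<beta> - j) * \<epsilon>)"
      using that by (simp add: of_nat_diff algebra_simps)
    also have "\<dots> < \<nu> (hasse j a) + \<nu> (hasse (\<beta> - j) b)"
    proof (cases "1 \<le> j")
      case True
      show ?thesis
        using ereal_add_less_le_mono hasse_gt_if_degree_less[OF a True] hasse_ge_if_degree_less[OF b(1)]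
        by (simp add: A B)
    next
      case False
      then have "1 \<le> \<beta> - j" using assms(5) by simp
      then have "ereal (B - real (\<beta> - j) * \<epsilon>) + ereal (A - real j * \<epsilon>)
          < \<nu> (hasse (\<beta> - j) b) + \<nu> (hasse j a)"
        using hasse_gt_if_degree_less[OF b \<open>1 \<le> \<beta> - j\<close>] hasse_ge_if_degree_less[OF a(1), of j]
        unfolding A B by (intro ereal_add_less_le_mono) simp_all
      then show ?thesis by (simp add: ac_simps)
    qed
    finally show ?thesis by (simp add: valuation_mult)
  qed
  then show ?thesis
    unfolding hasse_mult A B by (intro valuation_sum_gt) auto
qed

lemma hasse_mult_Q_eq:
  assumes q: "degree q < n" "q \<noteq> 0"
    and \<beta>: "1 \<le> \<beta>" "\<nu> (hasse \<beta> Q) = ereal (\<gamma> - real \<beta> * \<epsilon>)"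
  shows "\<nu> (hasse \<beta> (q * Q)) = \<nu> q + ereal (\<gamma> - real \<beta> * \<epsilon>)"
proof -
  obtain C where C: "\<nu> q = ereal C" using valuation_finite_if_degree_less[OF q] .
  have "hasse \<beta> (q * Q) = q * hasse \<beta> Q + (\<Sum>j\<in>{..\<beta>} - {0}. hasse j q * hasse (\<beta> - j) Q)"
    unfolding hasse_mult by (subst sum.remove[of _ 0]) (simp_all add: hasse_0)
  moreover have "\<nu> (q * hasse \<beta> Q) = ereal (C + \<gamma> - real \<beta> * \<epsilon>)"
    using \<beta>(2) by (simp add: valuation_mult C)
  moreover have "ereal (C + \<gamma> - real \<beta> * \<epsilon>) < \<nu> (hasse j q * hasse (\<beta> - j) Q)"
    if j: "j \<in> {..\<beta>} - {0}" for j
  proof -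
    have "ereal (C + \<gamma> - real \<beta> * \<epsilon>) = ereal (C - real j * \<epsilon>) + ereal (\<gamma> - real (\<beta> - j) * \<epsilon>)"
      using j by (simp add: of_nat_diff algebra_simps)
    also have "\<dots> < \<nu> (hasse j q) + \<nu> (hasse (\<beta> - j) Q)"
      using hasse_gt_if_degree_less[OF q, of j] j
      by (intro ereal_add_less_le_mono[OF _ hasse_Q_ge]) (simp add: C)
    finally show ?thesis by (simp add: valuation_mult)
  qed
  then have "ereal (C + \<gamma> - real \<beta> * \<epsilon>) < \<nu> (\<Sum>j\<in>{..\<beta>} - {0}. hasse j q * hasse (\<beta> - j) Q)"
    by (intro valuation_sum_gt) auto
  ultimately show ?thesis
    using valuation_add_eq_left by (simp add: C)
qed

lemma valuation_div_Q_gt_if_degree_less: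
  assumes a: "degree a < n" and b: "degree b < n" and q: "a * b div Q \<noteq> 0"
  shows "\<nu> a + \<nu> b < \<nu> (a * b div Q) + \<nu> Q"
proof (rule ccontr)
  txt \<open>In \<open>\<partial>\<^sub>\<beta>(q Q) = \<partial>\<^sub>\<beta>(a b) - \<partial>\<^sub>\<beta> r\<close>, with \<open>\<beta>\<close> realising \<open>\<epsilon>(Q)\<close>, the left side has
    value \<open>c\<close> while both terms on the right have value \<open>> c\<close>.\<close>
  define q r where "q = a * b div Q" and "r = a * b mod Q"
  have "a \<noteq> 0" "b \<noteq> 0" "q \<noteq> 0" using q by (auto simp: q_def)
  have dq: "degree q < n"
    unfolding q_def using degree_mult_le[of a b] a b by (intro degree_div_Q_less) simp
  obtain A where A: "\<nu> a = ereal A" using valuation_finite_if_degree_less[OF a \<open>a \<noteq> 0\<close>] .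
  obtain B where B: "\<nu> b = ereal B" using valuation_finite_if_degree_less[OF b \<open>b \<noteq> 0\<close>] .
  obtain C where C: "\<nu> q = ereal C" using valuation_finite_if_degree_less[OF dq \<open>q \<noteq> 0\<close>] .
  assume "\<not> ?thesis"
  then have CAB: "C + \<gamma> \<le> A + B" using C by (simp add: A B valuation_Q q_def)
  obtain \<beta> where \<beta>: "1 \<le> \<beta>" "\<nu> (hasse \<beta> Q) = ereal (\<gamma> - real \<beta> * \<epsilon>)"
    by (rule hasse_Q_attained)
  define c where "c = ereal (C + \<gamma> - real \<beta> * \<epsilon>)"
  have "\<nu> (hasse \<beta> (q * Q)) = c"
    using hasse_mult_Q_eq[OF dq \<open>q \<noteq> 0\<close> \<beta>] by (simp add: C c_def)
  have "c < \<nu> (hasse \<beta> (a * b))"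
  proof -
    have "c \<le> \<nu> a + \<nu> b - ereal (real \<beta> * \<epsilon>)" using CAB by (simp add: A B c_def)
    also have "\<dots> < \<nu> (hasse \<beta> (a * b))"
      using hasse_mult_gt_if_degree_less a b \<open>a \<noteq> 0\<close> \<open>b \<noteq> 0\<close> \<beta>(1) by blast
    finally show ?thesis .
  qed
  moreover have "c < \<nu> (hasse \<beta> r)"
  proof (cases "r = 0")
    case False
    have "r = a * b - q * Q" by (simp add: q_def r_def minus_div_mult_eq_mod)
    then have "min (\<nu> (a * b)) (\<nu> (q * Q)) \<le> \<nu> r" using valuation_diff_ge by simp
    then have "c \<le> \<nu> r - ereal (real \<beta> * \<epsilon>)"
      using CAB valuation_neq_inf_if_degree_less[OF degree_mod_Q_less False[unfolded r_def]]
      by (cases "\<nu> r") (auto simp: A B C c_def valuation_mult valuation_Q r_def)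
    also have "\<dots> < \<nu> (hasse \<beta> r)"
      using hasse_gt_if_degree_less degree_mod_Q_less False \<beta>(1) unfolding r_def by blast
    finally show ?thesis .
  qed (simp add: c_def)
  moreover have "hasse \<beta> (q * Q) = hasse \<beta> (a * b) - hasse \<beta> r"
    using hasse_add[of \<beta> "q * Q" r] by (simp add: q_def r_def)
  ultimately show False
    using valuation_diff_ge[of "hasse \<beta> (a * b)" "hasse \<beta> r"] \<open>\<nu> (hasse \<beta> (q * Q)) = c\<close>
    by (simp add: min_le_iff_disj not_le[symmetric])
qed

lemma valuation_mod_Q_mult:
  assumes a: "degree a < n" and b: "degree b < n"
  shows "\<nu> (a * b mod Q) = \<nu> a + \<nu> b"
proof (cases "a * b div Q = 0")
  case True
  then show ?thesis using div_mult_mod_eq[of "a * b" Q] by (simp add: valuation_mult)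
next
  case False
  have "\<nu> (a * b mod Q) = \<nu> (a * b + - (a * b div Q * Q))"
    by (simp add: minus_div_mult_eq_mod)
  also have "\<dots> = \<nu> (a * b)"
    using valuation_div_Q_gt_if_degree_less[OF a b False]
    by (intro valuation_add_eq_left) (simp add: valuation_mult)
  finally show ?thesis by (simp add: valuation_mult)
qed


subsection \<open>The truncation \<open>\<nu>\<^sub>Q\<close>\<close>

abbreviation \<nu>\<^sub>Q :: "'a poly \<Rightarrow> ereal" where "\<nu>\<^sub>Q \<equiv> trunc_val \<nu> Q"

lemma div_Q_reduced_add: "degree s < n \<Longrightarrow> (s + Q * p) div Q = p"
  using div_mult_self1[OF Q_neq_0, of s p] degree_Q by (simp add: div_poly_less mult.commute)

lemma qexp_coeff_reduced_add_0: "degree s < n \<Longrightarrow> qexp_coeff Q (s + Q * p) 0 = s"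
  using degree_Q by (simp add: qexp_coeff_def mod_poly_less)

lemma qexp_coeff_reduced_add_Suc:
  "degree s < n \<Longrightarrow> qexp_coeff Q (s + Q * p) (Suc j) = qexp_coeff Q p j"
  using div_Q_reduced_add by (simp add: qexp_coeff_def poly_div_mult_right)

lemma qexp_coeff_eq_0: "degree g < i \<Longrightarrow> qexp_coeff Q g i = 0"
proof -
  assume "degree g < i"
  moreover have "i \<le> degree (Q ^ i)"
    using degree_Q n_pos Q_neq_0 by (simp add: degree_power_eq)
  ultimately show ?thesis by (simp add: qexp_coeff_def div_poly_less)
qed

lemma trunc_val_eq_Min_atMost:
  assumes "degree g \<le> N"
  shows "\<nu>\<^sub>Q g = Min ((\<lambda>i. \<nu> (qexp_coeff Q g i * Q ^ i)) ` {..N})"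
proof -
  have "\<nu>\<^sub>Q g = Min ((\<lambda>i. \<nu> (qexp_coeff Q g i * Q ^ i)) ` {..degree g + k})" for k
  proof (induct k)
    case (Suc k)
    have "\<nu> (qexp_coeff Q g (Suc (degree g + k)) * Q ^ (Suc (degree g + k))) = \<infinity>"
      by (simp add: qexp_coeff_eq_0)
    with Suc show ?case by (simp add: atMost_Suc min_def)
  qed (simp add: trunc_val_def)
  from this[of "N - degree g"] assms show ?thesis by simp
qed

lemma trunc_val_reduced_add_Q_mult:
  assumes "degree s < n"
  shows "\<nu>\<^sub>Q (s + Q * p) = min (\<nu> s) (\<nu>\<^sub>Q p + \<nu> Q)"
proof -
  define N where "N = degree (s + Q * p) + degree p"
  define P where "P i = \<nu> (qexp_coeff Q p i * Q ^ i)" for i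
  have "\<nu>\<^sub>Q (s + Q * p) = Min ((\<lambda>i. \<nu> (qexp_coeff Q (s + Q * p) i * Q ^ i)) ` {..Suc N})"
    by (rule trunc_val_eq_Min_atMost) (simp add: N_def)
  also have "\<dots> = min (\<nu> s) (Min ((\<lambda>i. P i + \<nu> Q) ` {..N}))"
    unfolding atMost_Suc_eq_insert_0 image_insert image_image
    by (subst Min_insert) (simp_all add: qexp_coeff_reduced_add_0[OF assms]
        qexp_coeff_reduced_add_Suc[OF assms] P_def valuation_mult power_Suc2 mult.assoc[symmetric] add_ac)
  also have "Min ((\<lambda>i. P i + \<nu> Q) ` {..N}) = Min (P ` {..N}) + \<nu> Q"
    using mono_Min_commute[of "\<lambda>x. x + \<nu> Q" "P ` {..N}"]
    by (simp add: image_image mono_def add_right_mono)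
  also have "Min (P ` {..N}) = \<nu>\<^sub>Q p"
    unfolding P_def by (rule trunc_val_eq_Min_atMost[symmetric]) (simp add: N_def)
  finally show ?thesis .
qed

lemma trunc_val_0 [simp]: "\<nu>\<^sub>Q 0 = \<infinity>"
  by (simp add: trunc_val_def qexp_coeff_def)

lemma trunc_val_reduced: "degree s < n \<Longrightarrow> \<nu>\<^sub>Q s = \<nu> s"
  using trunc_val_reduced_add_Q_mult[of s 0] by (simp add: valuation_Q)

lemma trunc_val_Q_mult: "\<nu>\<^sub>Q (Q * p) = \<nu>\<^sub>Q p + \<nu> Q"
  using trunc_val_reduced_add_Q_mult[of 0 p] n_pos by simp

lemma trunc_val_mod_div: "\<nu>\<^sub>Q x = min (\<nu> (x mod Q)) (\<nu>\<^sub>Q (x div Q) + \<nu> Q)"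
  using trunc_val_reduced_add_Q_mult[OF degree_mod_Q_less, of x "x div Q"] by (simp add: mult.commute)

lemma degree_div_Q_less_degree: "x div Q \<noteq> 0 \<Longrightarrow> degree (x div Q) < degree x"
  using div_poly_less[of x Q] degree_Q n_pos by (intro degree_div_less) linarith+

lemma div_Q_induct [case_names div_Q]:
  assumes "\<And>x. (x div Q \<noteq> 0 \<Longrightarrow> P (x div Q)) \<Longrightarrow> P x"
  shows "P x"
proof (induct "degree x" arbitrary: x rule: less_induct)
  case less
  then show ?case
    using assms degree_div_Q_less_degree by blast
qed

lemma trunc_val_add_ge: "min (\<nu>\<^sub>Q x) (\<nu>\<^sub>Q y) \<le> \<nu>\<^sub>Q (x + y)"
proof (induct "degree x + degree y" arbitrary: x y rule: less_induct)
  case less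
  have sum: "x + y = (x mod Q + y mod Q) + Q * (x div Q + y div Q)"
    by (simp add: algebra_simps)
  have reduced: "degree (x mod Q + y mod Q) < n"
    by (intro degree_add_less degree_mod_Q_less)
  have IH: "min (\<nu>\<^sub>Q (x div Q)) (\<nu>\<^sub>Q (y div Q)) \<le> \<nu>\<^sub>Q (x div Q + y div Q)"
  proof (cases "x div Q = 0 \<and> y div Q = 0")
    case False
    then have "degree (x div Q) + degree (y div Q) < degree x + degree y"
      using degree_div_Q_less_degree[of x] degree_div_Q_less_degree[of y]
      by (cases "x div Q = 0"; cases "y div Q = 0") auto
    then show ?thesis by (rule less)
  qed simp
  have "min (\<nu>\<^sub>Q x) (\<nu>\<^sub>Q y) \<le> min (\<nu>\<^sub>Q (x div Q)) (\<nu>\<^sub>Q (y div Q)) + \<nu> Q"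
    using trunc_val_mod_div[of x] trunc_val_mod_div[of y] by (auto simp: min_def split: if_splits)
  also have "\<dots> \<le> \<nu>\<^sub>Q (x div Q + y div Q) + \<nu> Q"
    using IH by (rule add_right_mono)
  finally have "min (\<nu>\<^sub>Q x) (\<nu>\<^sub>Q y) \<le> \<nu>\<^sub>Q (x div Q + y div Q) + \<nu> Q" .
  moreover have "min (\<nu>\<^sub>Q x) (\<nu>\<^sub>Q y) \<le> \<nu> (x mod Q + y mod Q)"
    using valuation_add_ge[of "x mod Q" "y mod Q"] trunc_val_mod_div[of x] trunc_val_mod_div[of y]
    by (auto simp: min_def split: if_splits)
  ultimately show ?case
    unfolding sum trunc_val_reduced_add_Q_mult[OF reduced] by simp
qed

lemma trunc_val_uminus [simp]: "\<nu>\<^sub>Q (- x) = \<nu>\<^sub>Q x"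
proof (induct x rule: div_Q_induct)
  case (div_Q x)
  have "- x = - (x mod Q) + Q * (- (x div Q))"
    by (subst div_mult_mod_eq[of x Q, symmetric]) (simp add: algebra_simps)
  then have "\<nu>\<^sub>Q (- x) = min (\<nu> (- (x mod Q))) (\<nu>\<^sub>Q (- (x div Q)) + \<nu> Q)"
    by (simp only:) (rule trunc_val_reduced_add_Q_mult, simp add: degree_mod_Q_less)
  moreover have "\<nu>\<^sub>Q (- (x div Q)) = \<nu>\<^sub>Q (x div Q)"
    using div_Q by (cases "x div Q = 0") auto
  ultimately show ?case
    using trunc_val_mod_div[of x] by simp
qed

lemma trunc_val_diff_ge: "min (\<nu>\<^sub>Q x) (\<nu>\<^sub>Q y) \<le> \<nu>\<^sub>Q (x - y)"
  using trunc_val_add_ge[of x "- y"] by simp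

lemma trunc_val_add_eq_left:
  assumes "\<nu>\<^sub>Q x < \<nu>\<^sub>Q y"
  shows "\<nu>\<^sub>Q (x + y) = \<nu>\<^sub>Q x"
proof -
  have "min (\<nu>\<^sub>Q (x + y)) (\<nu>\<^sub>Q y) \<le> \<nu>\<^sub>Q x"
    using trunc_val_diff_ge[of "x + y" y] by simp
  then show ?thesis
    using trunc_val_add_ge[of x y] assms by (auto simp: min_def split: if_splits)
qed

lemma trunc_val_sum_ge: "(\<And>i. i \<in> A \<Longrightarrow> c \<le> \<nu>\<^sub>Q (F i)) \<Longrightarrow> c \<le> \<nu>\<^sub>Q (sum F A)"
proof (induct A rule: infinite_finite_induct)
  case (insert x A)
  then have "c \<le> min (\<nu>\<^sub>Q (F x)) (\<nu>\<^sub>Q (sum F A))" by simp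
  also have "\<dots> \<le> \<nu>\<^sub>Q (sum F (insert x A))" using insert trunc_val_add_ge by simp
  finally show ?case .
qed simp_all

lemma trunc_val_sum_gt:
  "(\<And>i. i \<in> A \<Longrightarrow> c < \<nu>\<^sub>Q (F i)) \<Longrightarrow> c < \<infinity> \<Longrightarrow> c < \<nu>\<^sub>Q (sum F A)"
proof (induct A rule: infinite_finite_induct)
  case (insert x A)
  then have "c < min (\<nu>\<^sub>Q (F x)) (\<nu>\<^sub>Q (sum F A))" by simp
  also have "\<dots> \<le> \<nu>\<^sub>Q (sum F (insert x A))" using insert trunc_val_add_ge by simp
  finally show ?case .
qed simp_all

lemma trunc_val_mult_reduced_ge:
  assumes d: "degree d < n"
  shows "\<nu>\<^sub>Q x + \<nu> d \<le> \<nu>\<^sub>Q (x * d)"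
proof (induct x rule: div_Q_induct)
  case (div_Q x)
  define s p where "s = x mod Q" and "p = x div Q"
  define r q where "r = s * d mod Q" and "q = s * d div Q"
  have s: "degree s < n" unfolding s_def by (rule degree_mod_Q_less)
  have "x * d = (s + Q * p) * d"
    by (simp add: s_def p_def mult.commute)
  also have "\<dots> = s * d + Q * (p * d)"
    by (simp add: algebra_simps)
  also have "s * d = r + Q * q"
    by (simp add: r_def q_def mult.commute)
  finally have "x * d = r + Q * (q + p * d)"
    by (simp add: algebra_simps)
  then have expansion: "\<nu>\<^sub>Q (x * d) = min (\<nu> r) (\<nu>\<^sub>Q (q + p * d) + \<nu> Q)"
    by (simp add: trunc_val_reduced_add_Q_mult r_def degree_mod_Q_less)
  have s_bound: "\<nu>\<^sub>Q x + \<nu> d \<le> \<nu> s + \<nu> d"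
    using trunc_val_mod_div[of x] by (simp add: s_def add_right_mono)
  have q_bound: "\<nu>\<^sub>Q x + \<nu> d \<le> \<nu>\<^sub>Q q + \<nu> Q"
  proof (cases "q = 0")
    case False
    have "degree q < n"
      unfolding q_def using degree_mult_le[of s d] s d by (intro degree_div_Q_less) simp
    then show ?thesis
      using s_bound valuation_div_Q_gt_if_degree_less[OF s d] False
      by (simp add: q_def trunc_val_reduced)
  qed (simp add: valuation_Q)
  have "\<nu>\<^sub>Q x + \<nu> d \<le> (\<nu>\<^sub>Q p + \<nu> d) + \<nu> Q"
    using trunc_val_mod_div[of x] add_right_mono[of "\<nu>\<^sub>Q x" "\<nu>\<^sub>Q p + \<nu> Q" "\<nu> d"]
    by (simp add: p_def ac_simps)
  also have "\<dots> \<le> \<nu>\<^sub>Q (p * d) + \<nu> Q"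
    using div_Q by (intro add_right_mono) (cases "p = 0", auto simp: p_def)
  finally have "\<nu>\<^sub>Q x + \<nu> d \<le> min (\<nu>\<^sub>Q q) (\<nu>\<^sub>Q (p * d)) + \<nu> Q"
    using q_bound by (auto simp: min_def)
  also have "\<dots> \<le> \<nu>\<^sub>Q (q + p * d) + \<nu> Q"
    by (rule add_right_mono[OF trunc_val_add_ge])
  finally show ?case
    using s_bound valuation_mod_Q_mult[OF s d] by (simp add: expansion r_def)
qed

lemma trunc_val_of_nat_mult_ge: "\<nu>\<^sub>Q x \<le> \<nu>\<^sub>Q (of_nat k * x)"
proof -
  have "\<nu>\<^sub>Q x \<le> \<nu>\<^sub>Q x + \<nu> (of_nat k)"
    using valuation_of_nat_nonneg[of k] by (simp add: add_increasing2)
  also have "\<dots> \<le> \<nu>\<^sub>Q (x * of_nat k)"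
    using n_pos by (intro trunc_val_mult_reduced_ge) (simp add: degree_of_nat)
  finally show ?thesis by (simp add: mult.commute)
qed

lemma trunc_val_mult_Q_power: "\<nu>\<^sub>Q (x * Q ^ j) = \<nu>\<^sub>Q x + ereal (real j * \<gamma>)"
proof (induct j)
  case (Suc j)
  have "\<nu>\<^sub>Q (x * Q ^ Suc j) = \<nu>\<^sub>Q (Q * (x * Q ^ j))" by (simp add: algebra_simps)
  also have "\<dots> = \<nu>\<^sub>Q x + ereal (real j * \<gamma>) + ereal \<gamma>"
    using Suc by (simp add: trunc_val_Q_mult valuation_Q)
  finally show ?case by (simp add: algebra_simps add.assoc)
qed simp

lemma trunc_val_Q_expansion_le:
  "(\<And>k. k \<le> m \<Longrightarrow> degree (s k) < n) \<Longrightarrow>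
    \<nu>\<^sub>Q (\<Sum>k\<le>m. s k * Q ^ k) \<le> \<nu> (s m) + ereal (real m * \<gamma>)"
proof (induct m arbitrary: s)
  case 0
  then show ?case by (simp add: trunc_val_reduced)
next
  case (Suc m)
  have "(\<Sum>k\<le>Suc m. s k * Q ^ k) = s 0 + Q * (\<Sum>k\<le>m. s (Suc k) * Q ^ k)"
    by (simp add: sum.atMost_Suc_shift sum_distrib_left algebra_simps del: sum.atMost_Suc)
  then have "\<nu>\<^sub>Q (\<Sum>k\<le>Suc m. s k * Q ^ k) \<le> \<nu>\<^sub>Q (\<Sum>k\<le>m. s (Suc k) * Q ^ k) + ereal \<gamma>"
    using trunc_val_reduced_add_Q_mult[of "s 0"] Suc(2)[of 0] by (simp add: valuation_Q)
  also have "\<dots> \<le> \<nu> (s (Suc m)) + ereal (real m * \<gamma>) + ereal \<gamma>"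
    using Suc(1)[of "\<lambda>k. s (Suc k)"] Suc(2) by (intro add_right_mono) simp
  also have "\<dots> = \<nu> (s (Suc m)) + ereal (real (Suc m) * \<gamma>)"
    by (simp only: add.assoc plus_ereal.simps) (simp add: algebra_simps)
  finally show ?case .
qed

end

section \<open>Expansions in \<open>Q + h\<close> with \<open>\<nu> h = \<nu> Q\<close>\<close>

locale key_polynomial_shift = key_polynomial +
  fixes h :: "'a poly"
  assumes degree_h: "degree h < n"
    and valuation_h: "\<nu> h = \<nu> Q"
begin

lemma trunc_val_mult_h_power_ge:
  assumes "degree a < n"
  shows "\<nu> a + ereal (real k * \<gamma>) \<le> \<nu>\<^sub>Q (a * h ^ k)"
proof (induct k)
  case 0
  then show ?case using assms by (simp add: trunc_val_reduced)
next
  case (Suc k)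
  have "\<nu> a + ereal (real (Suc k) * \<gamma>) = (\<nu> a + ereal (real k * \<gamma>)) + \<nu> h"
    by (simp add: valuation_h valuation_Q algebra_simps add.assoc)
  also have "\<dots> \<le> \<nu>\<^sub>Q (a * h ^ k) + \<nu> h" using Suc by (rule add_right_mono)
  also have "\<dots> \<le> \<nu>\<^sub>Q (a * h ^ k * h)" by (rule trunc_val_mult_reduced_ge[OF degree_h])
  finally show ?case by (simp add: algebra_simps)
qed

lemma exists_reduced_approx_mult_h_power:
  assumes a: "degree a < n" "a \<noteq> 0"
  shows "\<exists>r. degree r < n \<and> \<nu> r = \<nu> a + ereal (real k * \<gamma>)
    \<and> \<nu> a + ereal (real k * \<gamma>) < \<nu>\<^sub>Q (a * h ^ k - r)"
proof (induct k)
  case 0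
  obtain A where "\<nu> a = ereal A" using valuation_finite_if_degree_less[OF a] .
  with a show ?case by (intro exI[of _ a]) simp
next
  case (Suc k)
  then obtain r where r: "degree r < n" "\<nu> r = \<nu> a + ereal (real k * \<gamma>)"
    "\<nu> r < \<nu>\<^sub>Q (a * h ^ k - r)" by auto
  obtain A where A: "\<nu> a = ereal A" using valuation_finite_if_degree_less[OF a] .
  define q where "q = r * h div Q"
  have "a * h ^ Suc k - r * h mod Q = (a * h ^ k - r) * h + Q * q"
    using div_mult_mod_eq[of "r * h" Q] by (simp add: q_def algebra_simps)
  moreover have "\<nu> r + \<nu> h < \<nu>\<^sub>Q ((a * h ^ k - r) * h)"
  proof -
    have "\<nu> r + ereal \<gamma> < \<nu>\<^sub>Q (a * h ^ k - r) + ereal \<gamma>"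
      using ereal_less_add[OF _ r(3), of "ereal \<gamma>"] by (simp add: add.commute)
    also have "\<dots> \<le> \<nu>\<^sub>Q ((a * h ^ k - r) * h)"
      using trunc_val_mult_reduced_ge[OF degree_h] by (simp add: valuation_h valuation_Q)
    finally show ?thesis by (simp add: valuation_h valuation_Q)
  qed
  moreover have "\<nu> r + \<nu> h < \<nu>\<^sub>Q (Q * q)"
  proof (cases "q = 0")
    case False
    have "degree q < n"
      unfolding q_def using degree_mult_le[of r h] r(1) degree_h by (intro degree_div_Q_less) simp
    then show ?thesis
      using valuation_div_Q_gt_if_degree_less[OF r(1) degree_h] False
      by (simp add: q_def trunc_val_Q_mult trunc_val_reduced)
  qed (simp add: r(2) A valuation_h valuation_Q)
  ultimately have "\<nu> r + \<nu> h < \<nu>\<^sub>Q (a * h ^ Suc k - r * h mod Q)"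
    using trunc_val_add_ge[of "(a * h ^ k - r) * h" "Q * q"]
    by (metis min_less_iff_conj order_less_le_trans)
  moreover have "\<nu> r + \<nu> h = \<nu> a + ereal (real (Suc k) * \<gamma>)"
    by (simp add: r(2) A valuation_h valuation_Q algebra_simps)
  ultimately show ?case
    using valuation_mod_Q_mult[OF r(1) degree_h] degree_mod_Q_less
    by (intro exI[of _ "r * h mod Q"]) simp
qed

lemma trunc_val_mult_shift_power_ge:
  assumes "degree a < n"
  shows "\<nu> a + ereal (real i * \<gamma>) \<le> \<nu>\<^sub>Q (a * (Q + h) ^ i)"
proof -
  have expansion: "a * (Q + h) ^ i = (\<Sum>k\<le>i. of_nat (i choose k) * (a * h ^ (i - k) * Q ^ k))"
    by (simp add: binomial_ring sum_distrib_left algebra_simps)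
  have "\<nu> a + ereal (real i * \<gamma>) \<le> \<nu>\<^sub>Q (of_nat (i choose k) * (a * h ^ (i - k) * Q ^ k))"
    if "k \<le> i" for k
  proof -
    have "\<nu> a + ereal (real i * \<gamma>) = (\<nu> a + ereal (real (i - k) * \<gamma>)) + ereal (real k * \<gamma>)"
      using that by (simp add: of_nat_diff algebra_simps add.assoc)
    also have "\<dots> \<le> \<nu>\<^sub>Q (a * h ^ (i - k)) + ereal (real k * \<gamma>)"
      by (rule add_right_mono[OF trunc_val_mult_h_power_ge[OF assms]])
    also have "\<dots> = \<nu>\<^sub>Q (a * h ^ (i - k) * Q ^ k)"
      by (rule trunc_val_mult_Q_power[symmetric])
    also have "\<dots> \<le> \<nu>\<^sub>Q (of_nat (i choose k) * (a * h ^ (i - k) * Q ^ k))"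
      by (rule trunc_val_of_nat_mult_ge)
    finally show ?thesis .
  qed
  then show ?thesis
    unfolding expansion by (intro trunc_val_sum_ge) simp
qed

lemma exists_reduced_approx_mult_shift_power:
  assumes a: "degree a < n" "a \<noteq> 0"
  shows "\<exists>R. (\<forall>k. degree (R k) < n) \<and> \<nu> (R i) = \<nu> a \<and>
    \<nu> a + ereal (real i * \<gamma>)
      < \<nu>\<^sub>Q (a * (Q + h) ^ i - (\<Sum>k\<le>i. of_nat (i choose k) * (R k * Q ^ k)))"
proof -
  obtain A where A: "\<nu> a = ereal A" using valuation_finite_if_degree_less[OF a] .
  define R where "R k = (SOME r. degree r < n \<and> \<nu> r = \<nu> a + ereal (real (i - k) * \<gamma>)
    \<and> \<nu> a + ereal (real (i - k) * \<gamma>) < \<nu>\<^sub>Q (a * h ^ (i - k) - r))" for k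
  have R: "degree (R k) < n" "\<nu> (R k) = \<nu> a + ereal (real (i - k) * \<gamma>)"
    "\<nu> a + ereal (real (i - k) * \<gamma>) < \<nu>\<^sub>Q (a * h ^ (i - k) - R k)" for k
    using someI_ex[OF exists_reduced_approx_mult_h_power[OF a, of "i - k"]] by (simp_all add: R_def)
  have difference: "a * (Q + h) ^ i - (\<Sum>k\<le>i. of_nat (i choose k) * (R k * Q ^ k))
      = (\<Sum>k\<le>i. of_nat (i choose k) * ((a * h ^ (i - k) - R k) * Q ^ k))"
    by (simp add: binomial_ring sum_distrib_left sum_subtractf[symmetric] algebra_simps)
  have "\<nu> a + ereal (real i * \<gamma>) < \<nu>\<^sub>Q (of_nat (i choose k) * ((a * h ^ (i - k) - R k) * Q ^ k))"
    if "k \<le> i" for k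
  proof -
    have "\<nu> a + ereal (real i * \<gamma>) = (\<nu> a + ereal (real (i - k) * \<gamma>)) + ereal (real k * \<gamma>)"
      using that by (simp add: A of_nat_diff algebra_simps)
    also have "\<dots> < \<nu>\<^sub>Q (a * h ^ (i - k) - R k) + ereal (real k * \<gamma>)"
      using ereal_less_add[OF _ R(3), of "ereal (real k * \<gamma>)"] by (simp add: add.commute)
    also have "\<dots> = \<nu>\<^sub>Q ((a * h ^ (i - k) - R k) * Q ^ k)"
      by (rule trunc_val_mult_Q_power[symmetric])
    also have "\<dots> \<le> \<nu>\<^sub>Q (of_nat (i choose k) * ((a * h ^ (i - k) - R k) * Q ^ k))"
      by (rule trunc_val_of_nat_mult_ge)
    finally show ?thesis .
  qed
  then have "\<nu> a + ereal (real i * \<gamma>)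
      < \<nu>\<^sub>Q (a * (Q + h) ^ i - (\<Sum>k\<le>i. of_nat (i choose k) * (R k * Q ^ k)))"
    unfolding difference by (intro trunc_val_sum_gt) (auto simp: A)
  with R(1) R(2)[of i] show ?thesis by auto
qed

lemma trunc_val_sum_shift_power_le_common_value:
  assumes S: "finite S" "S \<noteq> {}"
    and a: "\<And>i. i \<in> S \<Longrightarrow> degree (a i) < n"
    and c: "\<And>i. i \<in> S \<Longrightarrow> \<nu> (a i) + ereal (real i * \<gamma>) = c" "c \<noteq> \<infinity>"
  shows "\<nu>\<^sub>Q (\<Sum>i\<in>S. a i * (Q + h) ^ i) \<le> c"
proof -
  txt \<open>Up to terms of \<open>\<nu>\<^sub>Q\<close> larger than \<open>c\<close>, the sum is a \<open>Q\<close>-expansion \<open>G\<close> with top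
    coefficient \<open>R m m\<close>, \<open>m = Max S\<close>, of value \<open>\<nu>(a m)\<close>.\<close>
  have "\<forall>i\<in>S. \<exists>R. (\<forall>k. degree (R k) < n) \<and> \<nu> (R i) = \<nu> (a i) \<and>
      c < \<nu>\<^sub>Q (a i * (Q + h) ^ i - (\<Sum>k\<le>i. of_nat (i choose k) * (R k * Q ^ k)))"
  proof
    fix i assume i: "i \<in> S"
    then have "a i \<noteq> 0" using c(1)[OF i] c(2) by auto
    with a[OF i] c(1)[OF i] show "\<exists>R. (\<forall>k. degree (R k) < n) \<and> \<nu> (R i) = \<nu> (a i) \<and>
        c < \<nu>\<^sub>Q (a i * (Q + h) ^ i - (\<Sum>k\<le>i. of_nat (i choose k) * (R k * Q ^ k)))"
      using exists_reduced_approx_mult_shift_power by blast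
  qed
  then obtain R where R: "\<And>i k. i \<in> S \<Longrightarrow> degree (R i k) < n"
    "\<And>i. i \<in> S \<Longrightarrow> \<nu> (R i i) = \<nu> (a i)"
    "\<And>i. i \<in> S \<Longrightarrow> c < \<nu>\<^sub>Q (a i * (Q + h) ^ i - (\<Sum>k\<le>i. of_nat (i choose k) * (R i k * Q ^ k)))"
    by (metis (no_types) bchoice)
  define m where "m = Max S"
  have m: "m \<in> S" "\<And>i. i \<in> S \<Longrightarrow> i \<le> m"
    using S by (simp_all add: m_def)
  define s where "s k = (\<Sum>i\<in>{i \<in> S. k \<le> i}. of_nat (i choose k) * R i k)" for k
  define G where "G = (\<Sum>i\<in>S. \<Sum>k\<le>i. of_nat (i choose k) * (R i k * Q ^ k))"
  have "G = (\<Sum>k\<le>m. \<Sum>i\<in>{i \<in> S. k \<le> i}. of_nat (i choose k) * (R i k * Q ^ k))"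
    unfolding G_def by (rule sum_sum_atMost_swap[OF S(1) m(2)])
  also have "\<dots> = (\<Sum>k\<le>m. s k * Q ^ k)"
    by (simp add: s_def sum_distrib_right mult.assoc)
  finally have "G = (\<Sum>k\<le>m. s k * Q ^ k)" .
  moreover have "\<And>k. degree (s k) < n"
    unfolding s_def using R(1) n_pos
    by (intro degree_sum_less) (auto intro!: le_less_trans[OF degree_mult_le] simp: degree_of_nat)
  moreover have "s m = R m m"
  proof -
    have "{i \<in> S. m \<le> i} = {m}" using m by force
    then show ?thesis by (simp add: s_def)
  qed
  ultimately have "\<nu>\<^sub>Q G \<le> c"
    using trunc_val_Q_expansion_le[of m s] R(2)[OF m(1)] c(1)[OF m(1)] by simp
  moreover have "c < \<nu>\<^sub>Q ((\<Sum>i\<in>S. a i * (Q + h) ^ i) - G)"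
    unfolding G_def sum_subtractf[symmetric] using R(3) c(2) by (intro trunc_val_sum_gt) auto
  ultimately have "\<nu>\<^sub>Q (G + ((\<Sum>i\<in>S. a i * (Q + h) ^ i) - G)) = \<nu>\<^sub>Q G"
    by (intro trunc_val_add_eq_left) auto
  with \<open>\<nu>\<^sub>Q G \<le> c\<close> show ?thesis by simp
qed

lemma trunc_val_mult_shift_power:
  assumes "degree a < n"
  shows "\<nu>\<^sub>Q (a * (Q + h) ^ i) = \<nu> a + ereal (real i * \<gamma>)"
proof (rule antisym)
  show "\<nu>\<^sub>Q (a * (Q + h) ^ i) \<le> \<nu> a + ereal (real i * \<gamma>)"
  proof (cases "a = 0")
    case False
    then obtain A where "\<nu> a = ereal A"
      using valuation_finite_if_degree_less[OF assms] by blast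
    then show ?thesis
      using trunc_val_sum_shift_power_le_common_value[of "{i}" "\<lambda>_. a"] assms by simp
  qed simp
qed (rule trunc_val_mult_shift_power_ge[OF assms])

lemma trunc_val_sum_shift_power_le:
  assumes a: "\<And>i. i \<le> r \<Longrightarrow> degree (a i) < n"
  shows "\<nu>\<^sub>Q (\<Sum>i\<le>r. a i * (Q + h) ^ i) \<le> (MIN i\<in>{..r}. \<nu> (a i) + ereal (real i * \<gamma>))"
    (is "_ \<le> ?c")
proof (cases "?c = \<infinity>")
  case False
  define L where "L i = \<nu> (a i) + ereal (real i * \<gamma>)" for i
  define S where "S = {i \<in> {..r}. L i = ?c}"
  have "?c \<in> L ` {..r}" unfolding L_def by (rule Min_in) auto
  then obtain j where "j \<le> r" "L j = ?c" by auto
  then have "S \<noteq> {}" by (auto simp: S_def)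
  have "\<nu>\<^sub>Q (\<Sum>i\<in>S. a i * (Q + h) ^ i) \<le> ?c"
    using \<open>S \<noteq> {}\<close> a False by (intro trunc_val_sum_shift_power_le_common_value) (auto simp: S_def L_def)
  moreover have "?c < \<nu>\<^sub>Q (\<Sum>i\<in>{..r} - S. a i * (Q + h) ^ i)"
  proof (intro trunc_val_sum_gt)
    fix i assume i: "i \<in> {..r} - S"
    then have "?c \<le> L i" "L i \<noteq> ?c" by (simp_all add: S_def L_def)
    then have "?c < L i" by simp
    also have "L i \<le> \<nu>\<^sub>Q (a i * (Q + h) ^ i)"
      using i a by (simp add: L_def trunc_val_mult_shift_power)
    finally show "?c < \<nu>\<^sub>Q (a i * (Q + h) ^ i)" .
  qed (use False in simp)
  ultimately have "\<nu>\<^sub>Q ((\<Sum>i\<in>S. a i * (Q + h) ^ i) + (\<Sum>i\<in>{..r} - S. a i * (Q + h) ^ i)) \<le> ?c"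
    by (subst trunc_val_add_eq_left) (rule order.strict_trans1, assumption+)
  moreover have "S \<subseteq> {..r}" by (auto simp: S_def)
  ultimately show ?thesis
    by (simp add: sum.subset_diff[of S "{..r}"] add.commute)
qed simp

end

theorem lemma2p2:
  fixes \<nu> :: "'a::field poly \<Rightarrow> ereal"
    and Q Q' f :: "'a poly" and n r :: nat and a :: "nat \<Rightarrow> 'a poly"
  assumes "valuation \<nu>"
    and "n \<ge> 1"
    and "key_poly \<nu> Q" and "key_poly \<nu> Q'"
    and "degree Q = n" and "degree Q' = n"
    and "\<nu> Q < \<nu> Q'"
    and "f = (\<Sum>i\<le>r. a i * Q' ^ i)"
    and "\<forall>i\<le>r. degree (a i) < n"
  shows "trunc_val \<nu> Q f = (MIN i\<in>{..r}. trunc_val \<nu> Q (a i * Q' ^ i))"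
proof -
  interpret key_polynomial \<nu> Q n
    using assms(1-3,5,7) by unfold_locales auto
  interpret key_polynomial_shift \<nu> Q n "Q' - Q"
  proof
    show "degree (Q' - Q) < n"
      using assms(2-6) by (intro degree_diff_less_if_lead_coeff_eq) (auto simp: key_poly_def)
    show "\<nu> (Q' - Q) = \<nu> Q"
      using assms(7) by (rule valuation_diff_eq_right)
  qed
  have terms: "(MIN i\<in>{..r}. \<nu>\<^sub>Q (a i * Q' ^ i)) = (MIN i\<in>{..r}. \<nu> (a i) + ereal (real i * \<gamma>))"
    using assms(9) trunc_val_mult_shift_power by (intro arg_cong[where f = Min] image_cong) auto
  show ?thesis
  proof (rule antisym)
    show "\<nu>\<^sub>Q f \<le> (MIN i\<in>{..r}. \<nu>\<^sub>Q (a i * Q' ^ i))"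
      unfolding terms using assms(8,9) trunc_val_sum_shift_power_le[of r a] by simp
    show "(MIN i\<in>{..r}. \<nu>\<^sub>Q (a i * Q' ^ i)) \<le> \<nu>\<^sub>Q f"
      unfolding assms(8) by (intro trunc_val_sum_ge) simp
  qed
qed

end
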